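(* Let $n\ge 2$ and let $F_1,\ldots,F_n$ be finite fields with $|F_1|\le\cdots\le|F_n|$. If $\mathrm{char}(F_1)=2$, then $$\chi\big(\mathrm{Reg}(\Gamma(F_1\times\cdots\times F_n))\big)=\omega\big(\mathrm{Reg}(\Gamma(F_1\times\cdots\times F_n))\big)=(|F_2|-1)\cdots(|F_n|-1).$$
   Context: For a commutative ring $R$ with identity, $Z(R)$ is the set of zero-divisors (including $0$) and $\mathrm{Reg}(R)=R\setminus Z(R)$. The total graph $T(\Gamma(R))$ is the simple graph with vertex set $R$ in which distinct $x,y$ are adjacent iff $x+y\in Z(R)$; $\mathrm{Reg}(\Gamma(R))$ is its induced subgraph on $\mathrm{Reg}(R)$. $\chi$ and $\omega$ denote chromatic and clique number. *)

theory Defs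
  imports "HOL-Algebra.Algebra"
begin

definition ring_char :: "('a, 'b) ring_scheme \<Rightarrow> nat" where
  "ring_char R = (if \<exists>n::nat. n > 0 \<and> add_pow R n \<one>\<^bsub>R\<^esub> = \<zero>\<^bsub>R\<^esub>
                  then (LEAST n::nat. n > 0 \<and> add_pow R n \<one>\<^bsub>R\<^esub> = \<zero>\<^bsub>R\<^esub>) else 0)"

definition prod_carrier :: "(nat \<Rightarrow> ('a, 'b) ring_scheme) \<Rightarrow> nat \<Rightarrow> (nat \<Rightarrow> 'a) set" where
  "prod_carrier F n = (\<Pi>\<^sub>E i\<in>{..<n}. carrier (F i))"

definition prod_zero :: "(nat \<Rightarrow> ('a, 'b) ring_scheme) \<Rightarrow> nat \<Rightarrow> (nat \<Rightarrow> 'a)" where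
  "prod_zero F n = (\<lambda>i\<in>{..<n}. \<zero>\<^bsub>F i\<^esub>)"

definition prod_add :: "(nat \<Rightarrow> ('a, 'b) ring_scheme) \<Rightarrow> nat \<Rightarrow> (nat \<Rightarrow> 'a) \<Rightarrow> (nat \<Rightarrow> 'a) \<Rightarrow> (nat \<Rightarrow> 'a)" where
  "prod_add F n x y = (\<lambda>i\<in>{..<n}. x i \<oplus>\<^bsub>F i\<^esub> y i)"

definition prod_mult :: "(nat \<Rightarrow> ('a, 'b) ring_scheme) \<Rightarrow> nat \<Rightarrow> (nat \<Rightarrow> 'a) \<Rightarrow> (nat \<Rightarrow> 'a) \<Rightarrow> (nat \<Rightarrow> 'a)" where
  "prod_mult F n x y = (\<lambda>i\<in>{..<n}. x i \<otimes>\<^bsub>F i\<^esub> y i)"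

definition prod_zero_divisors :: "(nat \<Rightarrow> ('a, 'b) ring_scheme) \<Rightarrow> nat \<Rightarrow> (nat \<Rightarrow> 'a) set" where
  "prod_zero_divisors F n = {x \<in> prod_carrier F n. \<exists>y \<in> prod_carrier F n.
      y \<noteq> prod_zero F n \<and> prod_mult F n x y = prod_zero F n}"

definition prod_regular :: "(nat \<Rightarrow> ('a, 'b) ring_scheme) \<Rightarrow> nat \<Rightarrow> (nat \<Rightarrow> 'a) set" where
  "prod_regular F n = prod_carrier F n - prod_zero_divisors F n"

text \<open>Adjacency of the total graph T(Gamma(R)): distinct x, y with x + y in Z(R).\<close>
definition total_adj :: "(nat \<Rightarrow> ('a, 'b) ring_scheme) \<Rightarrow> nat \<Rightarrow> (nat \<Rightarrow> 'a) \<Rightarrow> (nat \<Rightarrow> 'a) \<Rightarrow> bool" where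
  "total_adj F n x y \<longleftrightarrow> x \<noteq> y \<and> prod_add F n x y \<in> prod_zero_divisors F n"

definition is_clique :: "'v set \<Rightarrow> ('v \<Rightarrow> 'v \<Rightarrow> bool) \<Rightarrow> 'v set \<Rightarrow> bool" where
  "is_clique V E K \<longleftrightarrow> K \<subseteq> V \<and> (\<forall>x\<in>K. \<forall>y\<in>K. x \<noteq> y \<longrightarrow> E x y)"

definition clique_number :: "'v set \<Rightarrow> ('v \<Rightarrow> 'v \<Rightarrow> bool) \<Rightarrow> nat" where
  "clique_number V E = Max {card K | K. is_clique V E K}"

definition is_coloring :: "'v set \<Rightarrow> ('v \<Rightarrow> 'v \<Rightarrow> bool) \<Rightarrow> nat \<Rightarrow> ('v \<Rightarrow> nat) \<Rightarrow> bool" where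
  "is_coloring V E k c \<longleftrightarrow> (\<forall>x\<in>V. c x < k) \<and> (\<forall>x\<in>V. \<forall>y\<in>V. x \<noteq> y \<and> E x y \<longrightarrow> c x \<noteq> c y)"

definition chromatic_number :: "'v set \<Rightarrow> ('v \<Rightarrow> 'v \<Rightarrow> bool) \<Rightarrow> nat" where
  "chromatic_number V E = (LEAST k. \<exists>c. is_coloring V E k c)"

end

theory Submission imports Defs begin

text \<open>A regular element of \<open>F\<^sub>1 \<times> \<dots> \<times> F\<^sub>n\<close> is a tuple with all entries nonzero, and two
  of them are adjacent iff they differ and have opposite entries in some coordinate. Since
  \<open>char F\<^sub>1 = 2\<close>, the tuples with first entry \<open>1\<close> form a clique of size
  \<open>\<Prod>\<^bsub>i\<ge>2\<^esub> (|F\<^sub>i| - 1)\<close>. Conversely, for \<open>i \<ge> 2\<close> pick \<open>g\<^sub>i : F\<^sub>1\<^sup>* \<rightarrow> F\<^sub>i\<^sup>*\<close> with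
  \<open>g\<^sub>i a \<noteq> - g\<^sub>i b\<close> for \<open>a \<noteq> b\<close>: the constant \<open>1\<close> if \<open>char F\<^sub>i \<noteq> 2\<close>, and any injection
  (available since \<open>|F\<^sub>1| \<le> |F\<^sub>i|\<close>) if \<open>char F\<^sub>i = 2\<close>. Colour \<open>x\<close> by \<open>(g\<^sub>i(x\<^sub>1) x\<^sub>i)\<^bsub>i\<ge>2\<^esub>\<close>.
  Adjacent vertices of equal colour must differ in the first entry, so their zero sum
  sits in some coordinate \<open>i \<ge> 2\<close>, where \<open>x\<^sub>i = - y\<^sub>i\<close> forces \<open>g\<^sub>i(x\<^sub>1) = - g\<^sub>i(y\<^sub>1)\<close>.
  The formalisation indexes the factors from \<open>0\<close>.\<close>

lemma prod_zero_divisors_iff: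
  assumes dom: "\<And>i. i < n \<Longrightarrow> domain (F i)"
    and z: "z \<in> prod_carrier F n"
  shows "z \<in> prod_zero_divisors F n \<longleftrightarrow> (\<exists>i<n. z i = \<zero>\<^bsub>F i\<^esub>)"
proof
  assume "z \<in> prod_zero_divisors F n"
  then obtain y where y: "y \<in> prod_carrier F n" "y \<noteq> prod_zero F n" "prod_mult F n z y = prod_zero F n"
    unfolding prod_zero_divisors_def by blast
  obtain i where i: "i < n" "y i \<noteq> \<zero>\<^bsub>F i\<^esub>"
    using y(1,2) unfolding prod_carrier_def prod_zero_def
    by (metis PiE_restrict lessThan_iff restrict_ext)
  have "z i \<otimes>\<^bsub>F i\<^esub> y i = \<zero>\<^bsub>F i\<^esub>"
    using fun_cong[OF y(3), of i] i unfolding prod_mult_def prod_zero_def by simp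
  moreover have "z i \<in> carrier (F i)" "y i \<in> carrier (F i)"
    using z y(1) i unfolding prod_carrier_def by auto
  ultimately have "z i = \<zero>\<^bsub>F i\<^esub>"
    using i dom[of i] by (metis domain.integral_iff)
  with i show "\<exists>i<n. z i = \<zero>\<^bsub>F i\<^esub>" by blast
next
  assume "\<exists>i<n. z i = \<zero>\<^bsub>F i\<^esub>"
  then obtain i where i: "i < n" "z i = \<zero>\<^bsub>F i\<^esub>" by blast
  define y where "y = (\<lambda>j\<in>{..<n}. if j = i then \<one>\<^bsub>F j\<^esub> else \<zero>\<^bsub>F j\<^esub>)"
  have rg: "\<And>j. j < n \<Longrightarrow> ring (F j)"
    using dom by (simp add: domain.axioms(1) cring.axioms(1))
  have "y \<in> prod_carrier F n"
    unfolding y_def prod_carrier_def using rg by (auto intro!: ring.ring_simprules)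
  moreover have "y \<noteq> prod_zero F n"
  proof
    assume "y = prod_zero F n"
    then have "y i = prod_zero F n i" by simp
    then show False
      using i dom[of i] unfolding y_def prod_zero_def by (simp add: domain.one_not_zero)
  qed
  moreover have "prod_mult F n z y = prod_zero F n"
    unfolding prod_mult_def prod_zero_def y_def
  proof (rule restrict_ext)
    fix j assume j: "j \<in> {..<n}"
    then have "z j \<in> carrier (F j)" using z unfolding prod_carrier_def by auto
    then show "z j \<otimes>\<^bsub>F j\<^esub> (\<lambda>j\<in>{..<n}. if j = i then \<one>\<^bsub>F j\<^esub> else \<zero>\<^bsub>F j\<^esub>) j = \<zero>\<^bsub>F j\<^esub>"
      using j i rg[of j] by (auto simp: ring.ring_simprules)
  qed
  ultimately show "z \<in> prod_zero_divisors F n"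
    using z unfolding prod_zero_divisors_def by blast
qed

lemma prod_regular_iff:
  assumes "\<And>i. i < n \<Longrightarrow> domain (F i)"
  shows "x \<in> prod_regular F n \<longleftrightarrow> (\<forall>i<n. x i \<in> carrier (F i) - {\<zero>\<^bsub>F i\<^esub>}) \<and> x \<in> extensional {..<n}"
  using prod_zero_divisors_iff[OF assms, where z=x]
  unfolding prod_regular_def prod_carrier_def by (auto simp: PiE_iff)

lemma prod_regular_subset: "prod_regular F n \<subseteq> prod_carrier F n"
  unfolding prod_regular_def by blast

lemma total_adj_iff:
  assumes dom: "\<And>i. i < n \<Longrightarrow> domain (F i)"
    and "x \<in> prod_carrier F n" "y \<in> prod_carrier F n"
  shows "total_adj F n x y \<longleftrightarrow> x \<noteq> y \<and> (\<exists>i<n. x i \<oplus>\<^bsub>F i\<^esub> y i = \<zero>\<^bsub>F i\<^esub>)"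
proof -
  have "prod_add F n x y \<in> prod_carrier F n"
    using assms dom unfolding prod_carrier_def prod_add_def
    by (auto intro!: ring.ring_simprules(1) cring.axioms(1) domain.axioms(1))
  then show ?thesis
    unfolding total_adj_def using prod_zero_divisors_iff[OF dom]
    by (auto simp: prod_add_def)
qed

lemma ring_char_2_one_add_one:
  assumes "ring R" "ring_char R = 2"
  shows "\<one>\<^bsub>R\<^esub> \<oplus>\<^bsub>R\<^esub> \<one>\<^bsub>R\<^esub> = \<zero>\<^bsub>R\<^esub>"
proof -
  let ?char_mult = "\<lambda>n::nat. n > 0 \<and> add_pow R n \<one>\<^bsub>R\<^esub> = \<zero>\<^bsub>R\<^esub>"
  have ex: "\<exists>n. ?char_mult n"
    using assms(2) unfolding ring_char_def by (metis zero_neq_numeral)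
  then have "(LEAST n. ?char_mult n) = 2"
    using assms(2) unfolding ring_char_def by simp
  with LeastI_ex[OF ex] have "add_pow R (2::nat) \<one>\<^bsub>R\<^esub> = \<zero>\<^bsub>R\<^esub>" by simp
  then show ?thesis
    using assms(1) by (simp add: numeral_2_eq_2 add_pow_def ring.ring_simprules)
qed

lemma (in ring) add_eq_zero_imp_eq_if_one_add_one:
  assumes "\<one> \<oplus> \<one> = \<zero>" "a \<in> carrier R" "b \<in> carrier R" "a \<oplus> b = \<zero>"
  shows "a = b"
proof -
  have "a \<oplus> a = a \<otimes> (\<one> \<oplus> \<one>)" using assms(2) by (simp add: r_distr)
  also have "\<dots> = a \<oplus> b" using assms by simp
  finally show ?thesis using assms(2,3) by (metis add.l_cancel)
qed

lemma (in domain) eq_neg_if_mult_opposites: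
  assumes "a \<otimes> u = b \<otimes> v" "u \<oplus> v = \<zero>" "u \<noteq> \<zero>"
    and "a \<in> carrier R" "b \<in> carrier R" "u \<in> carrier R" "v \<in> carrier R"
  shows "a = \<ominus> b"
proof -
  have "v = \<ominus> u" using assms(2,6,7) by (metis add.inv_comm minus_equality)
  then have "a \<otimes> u = \<ominus> b \<otimes> u" using assms(1,5,6) by (simp add: l_minus r_minus)
  then show ?thesis using assms(3-6) by (simp add: m_rcancel)
qed

lemma clique_card_le_coloring:
  assumes "is_clique V E K" "is_coloring V E k c"
  shows "finite K \<and> card K \<le> k"
proof -
  have inj: "inj_on c K" and sub: "c ` K \<subseteq> {..<k}"
    using assms unfolding is_clique_def is_coloring_def inj_on_def by blast+
  then have "finite K" by (meson finite_imageD finite_lessThan finite_subset)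
  with inj sub show ?thesis using card_inj_on_le[of c K "{..<k}"] by simp
qed

lemma coloring_from_labelling:
  assumes "finite T" "\<And>x. x \<in> V \<Longrightarrow> f x \<in> T"
    and "\<And>x y. x \<in> V \<Longrightarrow> y \<in> V \<Longrightarrow> x \<noteq> y \<Longrightarrow> E x y \<Longrightarrow> f x \<noteq> f y"
  shows "\<exists>c. is_coloring V E (card T) c"
proof -
  obtain h where h: "bij_betw h T {0..<card T}"
    using ex_bij_betw_finite_nat[OF assms(1)] by blast
  have "is_coloring V E (card T) (h \<circ> f)"
    unfolding is_coloring_def using assms(2,3) h
    by (auto simp: bij_betw_def inj_on_def) blast
  then show ?thesis by blast
qed

lemma chromatic_number_eq_clique_number:
  assumes "is_clique V E K" "card K = k" "is_coloring V E k c"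
  shows "chromatic_number V E = k \<and> clique_number V E = k"
proof -
  define \<chi> where "\<chi> = chromatic_number V E"
  have colorable: "\<exists>c. is_coloring V E k c" using assms(3) by blast
  then have "\<chi> \<le> k" unfolding \<chi>_def chromatic_number_def by (rule Least_le)
  moreover have "\<exists>c. is_coloring V E \<chi> c"
    unfolding \<chi>_def chromatic_number_def by (rule LeastI) (rule colorable)
  then obtain c' where c': "is_coloring V E \<chi> c'" ..
  ultimately have "\<chi> = k" using clique_card_le_coloring[OF assms(1) c'] assms(2) by simp
  moreover have "clique_number V E = k"
    unfolding clique_number_def
  proof (rule Max_eqI)
    have "{card K |K. is_clique V E K} \<subseteq> {..k}"
      using clique_card_le_coloring[OF _ assms(3)] by auto
    then show "finite {card K |K. is_clique V E K}" by (rule finite_subset) simp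
  next
    fix y assume "y \<in> {card K |K. is_clique V E K}"
    then show "y \<le> k" using clique_card_le_coloring[OF _ assms(3)] by auto
  next
    show "k \<in> {card K |K. is_clique V E K}" using assms(1,2) by blast
  qed
  ultimately show ?thesis unfolding \<chi>_def by simp
qed

lemma (in ring) exists_sign_separating_map:
  assumes "finite (carrier R)" "finite A" "card A \<le> card (carrier R) - 1"
  shows "\<exists>g. g ` A \<subseteq> carrier R - {\<zero>} \<and> (\<forall>a\<in>A. \<forall>b\<in>A. a \<noteq> b \<longrightarrow> g a \<noteq> \<ominus> g b)"
proof (cases "\<one> = \<ominus> \<one>")
  case False
  have "\<one> \<noteq> \<zero>"
  proof
    assume "\<one> = \<zero>"
    with False show False by simp
  qed
  then have "(\<lambda>_. \<one>) ` A \<subseteq> carrier R - {\<zero>}" by auto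
  with False show ?thesis by (intro exI[of _ "\<lambda>_. \<one>"]) simp
next
  case True
  have neg: "\<ominus> u = u" if "u \<in> carrier R" for u
  proof -
    have "\<ominus> u = \<ominus> \<one> \<otimes> u" using that by (simp add: l_minus)
    also have "\<dots> = u" using that by (simp flip: True)
    finally show ?thesis .
  qed
  have "card A \<le> card (carrier R - {\<zero>})"
    using assms by (simp add: card_Diff_singleton)
  then obtain g where g: "g ` A \<subseteq> carrier R - {\<zero>}" "inj_on g A"
    using card_le_inj[of A "carrier R - {\<zero>}"] assms(1,2) by auto
  have "g a \<noteq> \<ominus> g b" if "a \<in> A" "b \<in> A" "a \<noteq> b" for a b
  proof -
    have "g a \<noteq> g b" using g(2) that by (meson inj_onD)
    moreover have "\<ominus> g b = g b" using g(1) that(2) neg by blast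
    ultimately show ?thesis by simp
  qed
  with g(1) show ?thesis by (intro exI[of _ g]) blast
qed

lemma prod_regular_first_one_clique:
  assumes dom: "\<And>i. i < n \<Longrightarrow> domain (F i)"
    and "0 < n" and one_add_one: "\<one>\<^bsub>F 0\<^esub> \<oplus>\<^bsub>F 0\<^esub> \<one>\<^bsub>F 0\<^esub> = \<zero>\<^bsub>F 0\<^esub>"
  shows "is_clique (prod_regular F n) (total_adj F n)
           (\<Pi>\<^sub>E i\<in>{..<n}. if i = 0 then {\<one>\<^bsub>F 0\<^esub>} else carrier (F i) - {\<zero>\<^bsub>F i\<^esub>})"
    (is "is_clique _ _ ?K")
proof -
  have one: "\<one>\<^bsub>F 0\<^esub> \<in> carrier (F 0) - {\<zero>\<^bsub>F 0\<^esub>}"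
    using dom[OF \<open>0 < n\<close>] by (simp add: domain.one_not_zero ring.ring_simprules(6)
        domain.axioms(1) cring.axioms(1))
  have sub: "x \<in> prod_regular F n" if x: "x \<in> ?K" for x
  proof -
    have "x i \<in> carrier (F i) - {\<zero>\<^bsub>F i\<^esub>}" if "i < n" for i
      using PiE_mem[OF x, of i] that one by (cases "i = 0") auto
    moreover have "x \<in> extensional {..<n}" using x unfolding PiE_iff by blast
    ultimately show ?thesis using prod_regular_iff[where F = F and n = n, OF dom] by blast
  qed
  have "total_adj F n x y" if "x \<in> ?K" "y \<in> ?K" "x \<noteq> y" for x y
  proof -
    have "x 0 = \<one>\<^bsub>F 0\<^esub>" "y 0 = \<one>\<^bsub>F 0\<^esub>"
      using PiE_mem[OF that(1), of 0] PiE_mem[OF that(2), of 0] \<open>0 < n\<close> by simp_all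
    then have "\<exists>i<n. x i \<oplus>\<^bsub>F i\<^esub> y i = \<zero>\<^bsub>F i\<^esub>"
      using one_add_one \<open>0 < n\<close> by (intro exI[of _ 0]) simp
    moreover have "x \<in> prod_carrier F n" "y \<in> prod_carrier F n"
      using sub prod_regular_subset that(1,2) by blast+
    ultimately show ?thesis using total_adj_iff[where F = F and n = n, OF dom] that(3) by blast
  qed
  with sub show ?thesis unfolding is_clique_def by blast
qed

lemma card_first_one_clique:
  fixes F :: "nat \<Rightarrow> ('a, 'b) ring_scheme"
  assumes "\<And>i. i < n \<Longrightarrow> ring (F i)" "\<And>i. i < n \<Longrightarrow> finite (carrier (F i))" "0 < n"
  shows "card (\<Pi>\<^sub>E i\<in>{..<n}. if i = 0 then {\<one>\<^bsub>F 0\<^esub>} else carrier (F i) - {\<zero>\<^bsub>F i\<^esub>})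
           = (\<Prod>i\<in>{1..<n}. card (carrier (F i)) - 1)"
proof -
  have "{..<n} = insert 0 {1..<n}"
    using assms(3) by (auto simp: not_le)
  then show ?thesis
    using assms(1,2) by (simp add: card_PiE card_Diff_singleton ring.ring_simprules(2))
qed

lemma sign_labels_differ_on_edges:
  assumes dom: "\<And>i. i < n \<Longrightarrow> domain (F i)"
    and one_add_one: "\<one>\<^bsub>F 0\<^esub> \<oplus>\<^bsub>F 0\<^esub> \<one>\<^bsub>F 0\<^esub> = \<zero>\<^bsub>F 0\<^esub>"
    and G_closed: "\<And>i a. i \<in> {1..<n} \<Longrightarrow> a \<in> carrier (F 0) - {\<zero>\<^bsub>F 0\<^esub>}
                     \<Longrightarrow> G i a \<in> carrier (F i) - {\<zero>\<^bsub>F i\<^esub>}"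
    and G_sep: "\<And>i a b. i \<in> {1..<n} \<Longrightarrow> a \<in> carrier (F 0) - {\<zero>\<^bsub>F 0\<^esub>}
                  \<Longrightarrow> b \<in> carrier (F 0) - {\<zero>\<^bsub>F 0\<^esub>} \<Longrightarrow> a \<noteq> b \<Longrightarrow> G i a \<noteq> \<ominus>\<^bsub>F i\<^esub> G i b"
    and x: "x \<in> prod_regular F n" and y: "y \<in> prod_regular F n" and adj: "total_adj F n x y"
  shows "(\<lambda>i\<in>{1..<n}. G i (x 0) \<otimes>\<^bsub>F i\<^esub> x i) \<noteq> (\<lambda>i\<in>{1..<n}. G i (y 0) \<otimes>\<^bsub>F i\<^esub> y i)"
proof
  assume labels: "(\<lambda>i\<in>{1..<n}. G i (x 0) \<otimes>\<^bsub>F i\<^esub> x i) = (\<lambda>i\<in>{1..<n}. G i (y 0) \<otimes>\<^bsub>F i\<^esub> y i)"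
  have comp: "G i (x 0) \<otimes>\<^bsub>F i\<^esub> x i = G i (y 0) \<otimes>\<^bsub>F i\<^esub> y i" if "i \<in> {1..<n}" for i
    using fun_cong[OF labels, of i] that by simp
  have xi: "x i \<in> carrier (F i) - {\<zero>\<^bsub>F i\<^esub>}" and yi: "y i \<in> carrier (F i) - {\<zero>\<^bsub>F i\<^esub>}"
    if "i < n" for i
    using x y that prod_regular_iff[where F = F and n = n, OF dom] by blast+
  obtain j where j: "j < n" "x j \<oplus>\<^bsub>F j\<^esub> y j = \<zero>\<^bsub>F j\<^esub>" and "x \<noteq> y"
    using adj x y prod_regular_subset total_adj_iff[where F = F and n = n, OF dom] by blast
  then have x0: "x 0 \<in> carrier (F 0) - {\<zero>\<^bsub>F 0\<^esub>}" and y0: "y 0 \<in> carrier (F 0) - {\<zero>\<^bsub>F 0\<^esub>}"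
    using xi yi by simp_all
  have "x 0 \<noteq> y 0"
  proof
    assume same: "x 0 = y 0"
    have "x i = y i" if "i < n" for i
    proof (cases "i = 0")
      case False
      then have i: "i \<in> {1..<n}" using that by simp
      then show ?thesis
        using comp[OF i] same G_closed[OF i y0] xi[OF that] yi[OF that]
          domain.m_lcancel[OF dom[OF that]] by auto
    qed (simp add: same)
    moreover have "x \<in> extensional {..<n}" "y \<in> extensional {..<n}"
      using x y prod_regular_iff[where F = F and n = n, OF dom] by blast+
    ultimately have "x = y" by (auto intro: extensionalityI)
    with \<open>x \<noteq> y\<close> show False ..
  qed
  moreover have "j \<noteq> 0"
  proof
    assume "j = 0"
    then have "x 0 = y 0"
      using ring.add_eq_zero_imp_eq_if_one_add_one[OF _ one_add_one] dom[OF j(1)] j x0 y0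
      by (simp add: domain.axioms(1) cring.axioms(1))
    with \<open>x 0 \<noteq> y 0\<close> show False ..
  qed
  then have j1: "j \<in> {1..<n}" using j(1) by simp
  then have "G j (x 0) = \<ominus>\<^bsub>F j\<^esub> G j (y 0)"
    using domain.eq_neg_if_mult_opposites[OF dom[OF j(1)] comp[OF j1] j(2)]
      G_closed[OF j1 x0] G_closed[OF j1 y0] xi yi j(1) by simp
  with G_sep[OF j1 x0 y0] \<open>x 0 \<noteq> y 0\<close> show False by simp
qed

lemma prod_regular_coloring:
  assumes dom: "\<And>i. i < n \<Longrightarrow> domain (F i)"
    and fin: "\<And>i. i < n \<Longrightarrow> finite (carrier (F i))"
    and one_add_one: "\<one>\<^bsub>F 0\<^esub> \<oplus>\<^bsub>F 0\<^esub> \<one>\<^bsub>F 0\<^esub> = \<zero>\<^bsub>F 0\<^esub>"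
    and card_le: "\<And>i. i < n \<Longrightarrow> card (carrier (F 0)) \<le> card (carrier (F i))"
  shows "\<exists>c. is_coloring (prod_regular F n) (total_adj F n) (\<Prod>i\<in>{1..<n}. card (carrier (F i)) - 1) c"
proof -
  let ?U = "\<lambda>i. carrier (F i) - {\<zero>\<^bsub>F i\<^esub>}"
  have rg: "ring (F i)" if "i < n" for i
    using dom[OF that] by (simp add: domain.axioms(1) cring.axioms(1))
  have card_U: "card (?U i) = card (carrier (F i)) - 1" if "i < n" for i
    using rg[OF that] fin[OF that] by (simp add: card_Diff_singleton ring.ring_simprules(2))
  have "\<forall>i\<in>{1..<n}. \<exists>g. g ` ?U 0 \<subseteq> ?U i \<and> (\<forall>a\<in>?U 0. \<forall>b\<in>?U 0. a \<noteq> b \<longrightarrow> g a \<noteq> \<ominus>\<^bsub>F i\<^esub> g b)"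
  proof
    fix i assume "i \<in> {1..<n}"
    then have i: "i < n" and n0: "0 < n" by auto
    have "finite (?U 0)" using fin[OF n0] by simp
    moreover have "card (?U 0) \<le> card (carrier (F i)) - 1"
      using card_U[OF n0] card_le[OF i] by simp
    ultimately show "\<exists>g. g ` ?U 0 \<subseteq> ?U i \<and> (\<forall>a\<in>?U 0. \<forall>b\<in>?U 0. a \<noteq> b \<longrightarrow> g a \<noteq> \<ominus>\<^bsub>F i\<^esub> g b)"
      by (rule ring.exists_sign_separating_map[OF rg[OF i] fin[OF i]])
  qed
  then obtain G where G: "\<forall>i\<in>{1..<n}. G i ` ?U 0 \<subseteq> ?U i \<and>
      (\<forall>a\<in>?U 0. \<forall>b\<in>?U 0. a \<noteq> b \<longrightarrow> G i a \<noteq> \<ominus>\<^bsub>F i\<^esub> G i b)"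
    by (rule bchoice[THEN exE]) blast
  define T where "T = (\<Pi>\<^sub>E i\<in>{1..<n}. ?U i)"
  define label where "label x = (\<lambda>i\<in>{1..<n}. G i (x 0) \<otimes>\<^bsub>F i\<^esub> x i)" for x
  have "label x \<in> T" if x: "x \<in> prod_regular F n" for x
    unfolding T_def label_def
  proof (rule restrict_PiE_iff[THEN iffD2], intro ballI)
    fix i assume i: "i \<in> {1..<n}"
    then have i': "i < n" by simp
    have "x 0 \<in> ?U 0" "x i \<in> ?U i"
      using i x prod_regular_iff[where F = F and n = n, OF dom] by auto
    moreover from this(1) have "G i (x 0) \<in> ?U i" using G i by blast
    ultimately show "G i (x 0) \<otimes>\<^bsub>F i\<^esub> x i \<in> ?U i"
      by (auto simp: domain.integral_iff[OF dom[OF i']] ring.ring_simprules(5)[OF rg[OF i']])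
  qed
  moreover have "label x \<noteq> label y"
    if "x \<in> prod_regular F n" "y \<in> prod_regular F n" "total_adj F n x y" for x y
    unfolding label_def using sign_labels_differ_on_edges[OF dom one_add_one _ _ that] G by blast
  moreover have "card T = (\<Prod>i\<in>{1..<n}. card (carrier (F i)) - 1)"
    unfolding T_def using card_U by (simp add: card_PiE)
  moreover have "finite T" unfolding T_def using fin by (intro finite_PiE) auto
  ultimately show ?thesis using coloring_from_labelling[of T "prod_regular F n"] by metis
qed

theorem lemma19:
  fixes F :: "nat \<Rightarrow> ('a, 'b) ring_scheme" and n :: nat
  assumes "n \<ge> 2"
    and "\<And>i. i < n \<Longrightarrow> field (F i)"
    and "\<And>i. i < n \<Longrightarrow> finite (carrier (F i))"
    and "\<And>i j. i \<le> j \<Longrightarrow> j < n \<Longrightarrow> card (carrier (F i)) \<le> card (carrier (F j))"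
    and "ring_char (F 0) = 2"
  shows "chromatic_number (prod_regular F n) (total_adj F n)
           = clique_number (prod_regular F n) (total_adj F n)
       \<and> clique_number (prod_regular F n) (total_adj F n)
           = (\<Prod>i\<in>{1..<n}. card (carrier (F i)) - 1)"
proof -
  have n0: "0 < n" using assms(1) by simp
  have dom: "domain (F i)" if "i < n" for i
    using assms(2)[OF that] by (rule field.axioms(1))
  have rg: "ring (F i)" if "i < n" for i
    using dom[OF that] by (simp add: domain.axioms(1) cring.axioms(1))
  have one_add_one: "\<one>\<^bsub>F 0\<^esub> \<oplus>\<^bsub>F 0\<^esub> \<one>\<^bsub>F 0\<^esub> = \<zero>\<^bsub>F 0\<^esub>"
    using ring_char_2_one_add_one[OF rg[OF n0] assms(5)] .
  obtain c where "is_coloring (prod_regular F n) (total_adj F n) (\<Prod>i\<in>{1..<n}. card (carrier (F i)) - 1) c"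
    using prod_regular_coloring[where F = F and n = n, OF dom assms(3) one_add_one assms(4)[OF le0]] by blast
  from chromatic_number_eq_clique_number[OF
      prod_regular_first_one_clique[where F = F and n = n, OF dom n0 one_add_one]
      card_first_one_clique[where F = F and n = n, OF rg assms(3) n0] this]
  show ?thesis by simp
qed

end
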